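(* Let $\mathcal{A}$ be a unital algebra over a field $F$ with $\operatorname{char}(F)\neq 2$, let $f:\mathcal{A}\to\mathcal{A}$ be linear and let $\alpha=\tfrac12 f(1)$. Then (a) $f\in\operatorname{QJCent}(\mathcal{A})$ if and only if $f(x)=\alpha\circ x$ for all $x\in\mathcal{A}$ and $\alpha\in Z_Q(\mathcal{A})$; (b) $f\in\operatorname{JCent}(\mathcal{A})$ if and only if $f(x)=\alpha\circ x$ for all $x\in\mathcal{A}$ and $\alpha\in Z_J(\mathcal{A})$.
   Context: $x\circ y=xy+yx$, $[x,y]=xy-yx$. $\operatorname{QJCent}(\mathcal{A})$ is the set of linear $f:\mathcal{A}\to\mathcal{A}$ with $f(x)\circ y=x\circ f(y)$ for all $x,y$; $\operatorname{JCent}(\mathcal{A})$ is the set of linear $f$ with $f(x\circ y)=f(x)\circ y$ for all $x,y$. $Z_J(\mathcal{A})=\{a\in\mathcal{A}: [[a,x],y]=0\ \forall x,y\in\mathcal{A}\}$ and $Z_Q(\mathcal{A})=\{a\in\mathcal{A}: [a,[x,y]]=0\ \forall x,y\in\mathcal{A}\}$. *)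

theory Defs
  imports Complex_Main
begin

definition jprod :: "'a::ring \<Rightarrow> 'a \<Rightarrow> 'a" (infixl "\<circ>\<^sub>J" 70) where
  "x \<circ>\<^sub>J y = x * y + y * x"

definition comm :: "'a::ring \<Rightarrow> 'a \<Rightarrow> 'a" where
  "comm x y = x * y - y * x"

definition unital_algebra :: "('k::field \<Rightarrow> 'a::ring_1 \<Rightarrow> 'a) \<Rightarrow> bool" where
  "unital_algebra scale \<longleftrightarrow> Vector_Spaces.vector_space scale \<and>
     (\<forall>c x y. scale c (x * y) = scale c x * y \<and> scale c (x * y) = x * scale c y)"

definition QJCent :: "('k::field \<Rightarrow> 'a::ring_1 \<Rightarrow> 'a) \<Rightarrow> ('a \<Rightarrow> 'a) set" where
  "QJCent scale = {f. Vector_Spaces.linear scale scale f \<and> (\<forall>x y. f x \<circ>\<^sub>J y = x \<circ>\<^sub>J f y)}"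

definition JCent :: "('k::field \<Rightarrow> 'a::ring_1 \<Rightarrow> 'a) \<Rightarrow> ('a \<Rightarrow> 'a) set" where
  "JCent scale = {f. Vector_Spaces.linear scale scale f \<and> (\<forall>x y. f (x \<circ>\<^sub>J y) = f x \<circ>\<^sub>J y)}"

definition Z_J :: "'a::ring set" where
  "Z_J = {a. \<forall>x y. comm (comm a x) y = 0}"

definition Z_Q :: "'a::ring set" where
  "Z_Q = {a. \<forall>x y. comm a (comm x y) = 0}"

end

theory Submission
  imports Defs
begin

text \<open>Putting one argument equal to \<open>1\<close> in either defining identity gives
\<open>2 f(x) = f(1) \<circ> x\<close>, so a (quasi-)Jordan centroid map is Jordan multiplication by
\<open>\<alpha> = f(1)/2\<close>. For a Jordan multiplication map the defining identities fail by exactly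
\<open>[\<alpha>,[x,y]]\<close> and \<open>[[\<alpha>,y],x]\<close> respectively, which vanish precisely on \<open>Z\<^sub>Q\<close> and \<open>Z\<^sub>J\<close>.\<close>

lemma jprod_one_left: "1 \<circ>\<^sub>J y = y + (y::'a::ring_1)"
  by (simp add: jprod_def)

lemma jprod_one_right: "y \<circ>\<^sub>J 1 = y + (y::'a::ring_1)"
  by (simp add: jprod_def)

lemma jprod_commute: "x \<circ>\<^sub>J y = y \<circ>\<^sub>J (x::'a::ring)"
  by (simp add: jprod_def add.commute)

lemma jprod_exchange_diff: "(a \<circ>\<^sub>J x) \<circ>\<^sub>J y - x \<circ>\<^sub>J (a \<circ>\<^sub>J y) = comm a (comm x (y::'a::ring))"
  by (simp add: jprod_def comm_def algebra_simps)

lemma jprod_assoc_diff: "a \<circ>\<^sub>J (x \<circ>\<^sub>J y) - (a \<circ>\<^sub>J x) \<circ>\<^sub>J y = comm (comm a y) (x::'a::ring)"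
  by (simp add: jprod_def comm_def algebra_simps)

lemma Z_Q_iff_jprod_exchange: "a \<in> Z_Q \<longleftrightarrow> (\<forall>x y. (a \<circ>\<^sub>J x) \<circ>\<^sub>J y = x \<circ>\<^sub>J (a \<circ>\<^sub>J (y::'a::ring)))"
  by (simp add: Z_Q_def flip: jprod_exchange_diff)

lemma Z_J_iff_jprod_assoc: "a \<in> Z_J \<longleftrightarrow> (\<forall>x y. a \<circ>\<^sub>J (x \<circ>\<^sub>J y) = (a \<circ>\<^sub>J x) \<circ>\<^sub>J (y::'a::ring))"
proof -
  have "a \<in> Z_J \<longleftrightarrow> (\<forall>x y. comm (comm a y) x = 0)"
    by (auto simp: Z_J_def)
  then show ?thesis
    by (simp flip: jprod_assoc_diff)
qed

lemma scale_half_double: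
  fixes scale :: "'k::field \<Rightarrow> 'v::ab_group_add \<Rightarrow> 'v"
  assumes "Vector_Spaces.vector_space scale" and "(2::'k) \<noteq> 0"
  shows "scale (1/2) (v + v) = v"
proof -
  interpret vector_space scale by fact
  have "v + v = scale 2 v"
    by (metis one_add_one scale_left_distrib scale_one)
  then show ?thesis
    using assms(2) by simp
qed

lemma scale_jprod_left:
  assumes "unital_algebra scale"
  shows "scale c a \<circ>\<^sub>J x = scale c (a \<circ>\<^sub>J x)"
proof -
  interpret vector_space scale
    using assms by (simp add: unital_algebra_def)
  have "scale c (p * q) = scale c p * q" "scale c (p * q) = p * scale c q" for p q
    using assms unfolding unital_algebra_def by blast+
  then show ?thesis
    unfolding jprod_def by (metis scale_right_distrib)
qed

lemma eq_half_jprodI: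
  fixes scale :: "'k::field \<Rightarrow> 'a::ring_1 \<Rightarrow> 'a"
  assumes "unital_algebra scale" and "(2::'k) \<noteq> 0" and "v + v = b \<circ>\<^sub>J x"
  shows "v = scale (1/2) b \<circ>\<^sub>J x"
proof -
  have "scale (1/2) b \<circ>\<^sub>J x = scale (1/2) (v + v)"
    using assms(1,3) by (simp add: scale_jprod_left)
  also have "\<dots> = v"
    using assms(1,2) by (simp add: scale_half_double unital_algebra_def)
  finally show ?thesis ..
qed

lemma QJCent_iff:
  fixes scale :: "'k::field \<Rightarrow> 'a::ring_1 \<Rightarrow> 'a"
  assumes alg: "unital_algebra scale" and char: "(2::'k) \<noteq> 0"
    and lin: "Vector_Spaces.linear scale scale f"
  defines "\<alpha> \<equiv> scale (1/2) (f 1)"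
  shows "f \<in> QJCent scale \<longleftrightarrow> (\<forall>x. f x = \<alpha> \<circ>\<^sub>J x) \<and> \<alpha> \<in> Z_Q"
proof
  assume "f \<in> QJCent scale"
  then have centroid: "f x \<circ>\<^sub>J y = x \<circ>\<^sub>J f y" for x y
    by (simp add: QJCent_def)
  have "f x = \<alpha> \<circ>\<^sub>J x" for x
    unfolding \<alpha>_def
  proof (rule eq_half_jprodI[OF alg char])
    have "f x + f x = f x \<circ>\<^sub>J 1"
      by (simp add: jprod_one_right)
    also have "\<dots> = x \<circ>\<^sub>J f 1"
      by (rule centroid)
    finally show "f x + f x = f 1 \<circ>\<^sub>J x"
      by (simp add: jprod_commute)
  qed
  with centroid show "(\<forall>x. f x = \<alpha> \<circ>\<^sub>J x) \<and> \<alpha> \<in> Z_Q"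
    by (simp add: Z_Q_iff_jprod_exchange)
next
  assume "(\<forall>x. f x = \<alpha> \<circ>\<^sub>J x) \<and> \<alpha> \<in> Z_Q"
  with lin show "f \<in> QJCent scale"
    by (simp add: QJCent_def Z_Q_iff_jprod_exchange)
qed

lemma JCent_iff:
  fixes scale :: "'k::field \<Rightarrow> 'a::ring_1 \<Rightarrow> 'a"
  assumes alg: "unital_algebra scale" and char: "(2::'k) \<noteq> 0"
    and lin: "Vector_Spaces.linear scale scale f"
  defines "\<alpha> \<equiv> scale (1/2) (f 1)"
  shows "f \<in> JCent scale \<longleftrightarrow> (\<forall>x. f x = \<alpha> \<circ>\<^sub>J x) \<and> \<alpha> \<in> Z_J"
proof
  assume "f \<in> JCent scale"
  then have centroid: "f (x \<circ>\<^sub>J y) = f x \<circ>\<^sub>J y" for x y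
    by (simp add: JCent_def)
  have "f x = \<alpha> \<circ>\<^sub>J x" for x
    unfolding \<alpha>_def
  proof (rule eq_half_jprodI[OF alg char])
    interpret Vector_Spaces.linear scale scale f by (fact lin)
    show "f x + f x = f 1 \<circ>\<^sub>J x"
      using centroid[of 1 x] by (simp add: jprod_one_left add)
  qed
  with centroid show "(\<forall>x. f x = \<alpha> \<circ>\<^sub>J x) \<and> \<alpha> \<in> Z_J"
    by (simp add: Z_J_iff_jprod_assoc)
next
  assume "(\<forall>x. f x = \<alpha> \<circ>\<^sub>J x) \<and> \<alpha> \<in> Z_J"
  with lin show "f \<in> JCent scale"
    by (simp add: JCent_def Z_J_iff_jprod_assoc)
qed

theorem theorem3p1:
  fixes scale :: "'k::field \<Rightarrow> 'a::ring_1 \<Rightarrow> 'a"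
    and f :: "'a \<Rightarrow> 'a"
  assumes alg: "unital_algebra scale"
    and char: "(2::'k) \<noteq> 0"
    and lin: "Vector_Spaces.linear scale scale f"
  defines "\<alpha> \<equiv> scale (1/2) (f 1)"
  shows "(f \<in> QJCent scale \<longleftrightarrow> (\<forall>x. f x = \<alpha> \<circ>\<^sub>J x) \<and> \<alpha> \<in> Z_Q) \<and>
         (f \<in> JCent scale \<longleftrightarrow> (\<forall>x. f x = \<alpha> \<circ>\<^sub>J x) \<and> \<alpha> \<in> Z_J)"
  using QJCent_iff[OF alg char lin] JCent_iff[OF alg char lin]
  unfolding \<alpha>_def by blast

end
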